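(* Consider algorithm DIST-OPT as described in the context with all delays bounded by $\tau_{\max}$, and let $\boldsymbol\lambda(t)=(\underline\lambda(t),\bar\lambda(t))\in\mathbb R^{2N}$ be its dual iterates, with the convention $\boldsymbol\lambda(s)=0$ for $s<0$. Define $$g(t)=\begin{bmatrix}\underline v-v(p(t),q(t))\\ v(p(t),q(t))-\bar v\end{bmatrix}.$$ Then for all $t\in\mathbb N$, $$\|\nabla D(\boldsymbol\lambda(t))-g(t)\|\le L\sqrt N\sum_{\tau=t-t_0}^{t-1}\|\boldsymbol\lambda(\tau)-\boldsymbol\lambda(\tau+1)\|,$$ where $t_0=d(\tau_{\max}+1)$ and $L=2(\|R\|^2+\|X\|^2)/a_{\min}$.
   Context: Network: a radial network is a tree on nodes $\{0,1,\dots,N\}$ rooted at node $0$; $\mathcal N=\{1,\dots,N\}$. Each $i\in\mathcal N$ has a unique parent $\sigma_i\in\{0,\dots,N\}$. Each edge $(h,k)$ ($h$ the parent of $k$) has resistance $r_{hk}\ge0$ and reactance $x_{hk}\ge0$. $\mathcal P_i$ is the set of edges on the path from $0$ to $i$. Define $N\times N$ matrices $R_{ij}=2\sum_{(h,k)\in\mathcal P_i\cap\mathcal P_j}r_{hk}$ and $X_{ij}=2\sum_{(h,k)\in\mathcal P_i\cap\mathcal P_j}x_{hk}$. $\texttt{dist}(i,j)$ is the number of edges on the tree path between $i$ and $j$, and $d=\max_{i,j\in\mathcal N}\texttt{dist}(i,j)$. Voltage model: $v(p,q)=Rp+Xq+v_0\mathbf 1\in\mathbb R^N$ for a fixed $v_0\in\mathbb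 R$. $\|\cdot\|$ is the Euclidean norm on vectors and the spectral norm on matrices. Problem (P): given vectors $\underline v\le\bar v$, $\underline p\le\bar p$, $\underline q\le\bar q$ in $\mathbb R^N$ and reals $a_i^{P},a_i^{Q}>0$, $b_i^P,b_i^Q,c_i^P,c_i^Q$, minimize over $p,q\in\mathbb R^N$ the cost $C^P(p)+C^Q(q)$, where $C^P(p)=\sum_{i}(\tfrac{a_i^P}{2}p_i^2+b_i^Pp_i+c_i^P)$, $C^Q(q)=\sum_{i}(\tfrac{a_i^Q}{2}q_i^2+b_i^Qq_i+c_i^Q)$, subject to $\underline v\le v(p,q)\le\bar v$, $\underline p\le p\le\bar p$, $\underline q\le q\le\bar q$. Let $a_{\min}=\min\{a_1^P,\dots,a_N^P,a_1^Q,\dots,a_N^Q\}$. The dual function is $D(\boldsymbol\lambda)=\min_{(p,q)\in[\underline p,\bar p]\times[\underline q,\bar q]}\bigl[C^P(p)+C^Q(q)+\underline\lambda^\top(\underline v-v(p,q))+\bar\lambda^\top(v(p,q)-\bar v)\bigr]$ for $\boldsymbol\lambda=(\underline\lambda,\bar\lambda)\in\mathbb R^{2N}$; it is differentiable. Algorithm DIST-OPT. For $i\in\mathcal N$, the algorithmic parent of $i$ is $\sigma_i$ if $\sigma_i\neq0$; if $\sigma_i=0$, $i$ has no algorithmic parent. Let $\mathcal C_i=\{j\in\mathcal N:\sigma_j=i\}$. For each $j\in\mathcal N$ having an algorithmic parent and each $t\in\mathbb N$, there are delays $\tau^{\uparrow}_j(t),\tau^{\downarrow}_j(t)\in\mathbb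 Z_{\ge0}$. Write $[x]_a^b=\min(\max(x,a),b)$ and $\lceil x\rceil_+=\max(x,0)$. Initialization ($t=0$): for all $i\in\mathcal N$, $z_i^P(0)=z_i^Q(0)=\underline\lambda_i(0)=\bar\lambda_i(0)=\lambda_i(0)=0$ and $\alpha_i(0)=\beta_i^P(0)=\beta_i^Q(0)=\hat\alpha_i(0)=\hat\beta_i^P(0)=\hat\beta_i^Q(0)=0$; any message $\alpha_i(s),\beta_i^P(s),\beta_i^Q(s)$ with $s<0$ is $0$; if $i$ has no algorithmic parent then $\hat\beta_i^P(t)=\hat\beta_i^Q(t)=0$ for all $t$. For $t=0,1,2,\dots$ and every $i\in\mathcal N$: (1) $p_i(t)=\bigl[(z_i^P(t)-b_i^P)/a_i^P\bigr]_{\underline p_i}^{\bar p_i}$ and $q_i(t)=\bigl[(z_i^Q(t)-b_i^Q)/a_i^Q\bigr]_{\underline q_i}^{\bar q_i}$. (2) $v(t)=v(p(t),q(t))$; $\underline\lambda_i(t+1)=\lceil\underline\lambda_i(t)+\gamma(\underline v_i-v_i(t))\rceil_+$, $\bar\lambda_i(t+1)=\lceil\bar\lambda_i(t)+\gamma(v_i(t)-\bar v_i)\rceil_+$, $\lambda_i(t+1)=\underline\lambda_i(t+1)-\bar\lambda_i(t+1)$, with step size $\gamma>0$. (3) $\alpha_i(t+1)=\lambda_i(t+1)+\sum_{j\in\mathcal C_i}\hat\alpha_j(t)$, and for each $j\in\mathcal C_i$: $\beta_j^P(t+1)=R_{ii}\bigl(\lambda_i(t+1)+\sum_{r\in\mathcal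 C_i\setminus\{j\}}\hat\alpha_r(t)\bigr)+\hat\beta_i^P(t)$ and $\beta_j^Q(t+1)=X_{ii}\bigl(\lambda_i(t+1)+\sum_{r\in\mathcal C_i\setminus\{j\}}\hat\alpha_r(t)\bigr)+\hat\beta_i^Q(t)$. For each $j$ with an algorithmic parent: $\hat\alpha_j(t+1)=\alpha_j(t+1-\tau^{\uparrow}_j(t))$, $\hat\beta_j^P(t+1)=\beta_j^P(t+1-\tau^{\downarrow}_j(t))$, $\hat\beta_j^Q(t+1)=\beta_j^Q(t+1-\tau^{\downarrow}_j(t))$. (4) $z_i^P(t+1)=R_{ii}\bigl(\lambda_i(t+1)+\sum_{j\in\mathcal C_i}\hat\alpha_j(t+1)\bigr)+\hat\beta_i^P(t+1)$ and $z_i^Q(t+1)=X_{ii}\bigl(\lambda_i(t+1)+\sum_{j\in\mathcal C_i}\hat\alpha_j(t+1)\bigr)+\hat\beta_i^Q(t+1)$. *)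

theory Defs
  imports "HOL-Analysis.Analysis"
begin

text \<open>Nodes 1..N are the elements of a finite type 'n; the root node 0
  is represented by None. par i = Some j means sigma_i = j, par i = None means sigma_i = 0.
  The edge (sigma_k, k) is identified with its child endpoint k.\<close>

fun parpow :: "('n \<Rightarrow> 'n option) \<Rightarrow> nat \<Rightarrow> 'n \<Rightarrow> 'n option" where
  "parpow par 0 i = Some i"
| "parpow par (Suc k) i = Option.bind (parpow par k i) par"

definition is_radial :: "('n \<Rightarrow> 'n option) \<Rightarrow> bool" where
  "is_radial par \<longleftrightarrow> (\<forall>i. \<exists>k. parpow par k i = None)"

definition path_edges :: "('n \<Rightarrow> 'n option) \<Rightarrow> 'n \<Rightarrow> 'n set" where
  "path_edges par i = {k. \<exists>m. parpow par m i = Some k}"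

definition children :: "('n \<Rightarrow> 'n option) \<Rightarrow> 'n \<Rightarrow> 'n set" where
  "children par i = {j. par j = Some i}"

definition path_matrix :: "('n::finite \<Rightarrow> 'n option) \<Rightarrow> ('n \<Rightarrow> real) \<Rightarrow> real^'n^'n" where
  "path_matrix par r = (\<chi> i j. 2 * (\<Sum>k\<in>path_edges par i \<inter> path_edges par j. r k))"

text \<open>Number of edges on the tree path between i and j: edges on exactly one of the root paths.\<close>
definition tree_dist :: "('n \<Rightarrow> 'n option) \<Rightarrow> 'n \<Rightarrow> 'n \<Rightarrow> nat" where
  "tree_dist par i j = card (path_edges par i - path_edges par j) + card (path_edges par j - path_edges par i)"

definition diam :: "('n::finite \<Rightarrow> 'n option) \<Rightarrow> nat" where
  "diam par = Max {tree_dist par i j | i j. True}"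

definition spec_norm :: "real^'n^'n \<Rightarrow> real" where
  "spec_norm M = onorm (\<lambda>v. M *v v)"

definition voltage :: "real^'n^'n \<Rightarrow> real^'n^'n \<Rightarrow> real \<Rightarrow> real^'n \<Rightarrow> real^'n \<Rightarrow> real^'n" where
  "voltage R X v0 p q = R *v p + X *v q + (\<chi> i. v0)"

definition clamp :: "real \<Rightarrow> real \<Rightarrow> real \<Rightarrow> real" where
  "clamp x a b = min (max x a) b"

definition quad_cost :: "real^'n \<Rightarrow> real^'n \<Rightarrow> real^'n \<Rightarrow> real^'n \<Rightarrow> real" where
  "quad_cost a b c p = (\<Sum>i\<in>UNIV. a$i / 2 * (p$i)^2 + b$i * p$i + c$i)"

definition vbox :: "real^'n \<Rightarrow> real^'n \<Rightarrow> (real^'n) set" where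
  "vbox lo hi = {p. \<forall>i. lo$i \<le> p$i \<and> p$i \<le> hi$i}"

definition dual_fun ::
  "real^'n^'n \<Rightarrow> real^'n^'n \<Rightarrow> real \<Rightarrow> real^'n \<Rightarrow> real^'n \<Rightarrow> real^'n \<Rightarrow> real^'n \<Rightarrow> real^'n \<Rightarrow> real^'n
   \<Rightarrow> real^'n \<Rightarrow> real^'n \<Rightarrow> real^'n \<Rightarrow> real^'n \<Rightarrow> real^'n \<Rightarrow> real^'n \<Rightarrow> (real^'n) \<times> (real^'n) \<Rightarrow> real" where
  "dual_fun R X v0 vlo vhi plo phi qlo qhi aP bP cP aQ bQ cQ lam =
     Inf {quad_cost aP bP cP p + quad_cost aQ bQ cQ q
          + inner (fst lam) (vlo - voltage R X v0 p q) + inner (snd lam) (voltage R X v0 p q - vhi)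
          | p q. p \<in> vbox plo phi \<and> q \<in> vbox qlo qhi}"

definition has_gradient :: "('a::real_inner \<Rightarrow> real) \<Rightarrow> 'a \<Rightarrow> 'a \<Rightarrow> bool" where
  "has_gradient f G x \<longleftrightarrow> (f has_derivative (\<lambda>h. inner G h)) (at x)"

end

theory Submission
  imports Defs
begin

text \<open>By induction on time, every message of DIST-OPT is a weighted sum of possibly stale
  dual entries \<open>\<lambda>\<^sub>k(\<sigma>\<^sub>k)\<close>: the upward message \<open>\<alpha>\<^sub>j\<close> sums \<open>\<lambda>\<^sub>k\<close> over the subtree of \<open>j\<close>,
  the downward message \<open>\<beta>\<^sub>j\<close> sums \<open>R\<^sub>j\<^sub>k \<lambda>\<^sub>k\<close> over its complement, and finally
  \<open>z\<^sub>i(t) = \<Sum>\<^sub>k R\<^sub>i\<^sub>k \<lambda>\<^sub>k(\<sigma>\<^sub>k)\<close> with \<open>t - dist(i,k)(\<tau>\<^sub>m\<^sub>a\<^sub>x + 1) \<le> \<sigma>\<^sub>k \<le> t\<close>, since every hop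
  costs one step plus at most \<open>\<tau>\<^sub>m\<^sub>a\<^sub>x\<close> of delay.
  This works because \<open>R\<^sub>i\<^sub>k\<close> only depends on the common part of the root paths of \<open>i\<close> and \<open>k\<close>.

  The exact gradient of the dual function is the constraint residual at the clamped minimiser of the
  Lagrangian, whose price vector is \<open>R \<lambda>(t)\<close>. Clamping is 1-Lipschitz, so the primal iterate is
  off by at most \<open>R V / a\<^sub>m\<^sub>i\<^sub>n\<close>, where \<open>V\<^sub>k\<close> is the total variation of \<open>\<lambda>\<^sub>k\<close> over the last \<open>t\<^sub>0\<close>
  steps; the voltage picks up another factor \<open>\<parallel>R\<parallel>\<close> (resp. \<open>\<parallel>X\<parallel>\<close>).\<close>

section \<open>Paths and subtrees of a radial network\<close>

lemma parpow_Suc_left: "parpow par (Suc k) i = Option.bind (par i) (parpow par k)"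
proof (induction k arbitrary: i)
  case 0 then show ?case by (cases "par i") auto
next
  case (Suc k) then show ?case by (cases "par i") auto
qed

lemma parpow_add: "parpow par m i = Some c \<Longrightarrow> parpow par (m + l) i = parpow par l c"
  by (induction l) auto

lemma parpow_None_add: "parpow par m i = None \<Longrightarrow> parpow par (m + l) i = None"
  by (induction l) auto

lemma tree_dist_le_diam: "tree_dist par i j \<le> diam par"
  unfolding diam_def
proof (rule Max_ge)
  have "{tree_dist par i j |i j. True} = (\<lambda>(i, j). tree_dist par i j) ` UNIV" by auto
  then show "finite {tree_dist par i j |i j. True}" by simp
qed auto

locale radial_network =
  fixes par :: "'n::finite \<Rightarrow> 'n option"
  assumes radial: "is_radial par"
begin

abbreviation P where "P \<equiv> path_edges par"
abbreviation C where "C \<equiv> children par"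

definition subtree :: "'n \<Rightarrow> 'n set" where
  "subtree i = {k. i \<in> P k}"

lemma path_edges_self: "i \<in> P i"
  unfolding path_edges_def by (auto intro: exI[of _ 0])

lemma path_edges_parent: "par j = Some i \<Longrightarrow> P j = insert j (P i)"
  unfolding path_edges_def
proof safe
  fix x m assume "par j = Some i" "parpow par m j = Some x" "x \<noteq> j"
  then show "\<exists>m. parpow par m i = Some x"
    by (cases m) (auto simp: parpow_Suc_left simp del: parpow.simps(2))
next
  fix x m assume "par j = Some i" "parpow par m i = Some x"
  then show "\<exists>m. parpow par m j = Some x"
    by (auto simp: parpow_Suc_left simp del: parpow.simps(2) intro!: exI[of _ "Suc m"])
qed (auto intro: exI[of _ 0])

lemma path_edges_root: "par j = None \<Longrightarrow> P j = {j}"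
  unfolding path_edges_def
proof safe
  fix x m assume "par j = None" "parpow par m j = Some x"
  then show "x = j" by (cases m) (auto simp: parpow_Suc_left simp del: parpow.simps(2))
qed (auto intro: exI[of _ 0])

text \<open>A node on the path of its own parent would close a cycle, which radiality excludes.\<close>
lemma not_in_path_edges_parent:
  assumes "par j = Some i" shows "j \<notin> P i"
proof
  assume "j \<in> P i"
  then obtain m where m: "parpow par m i = Some j" unfolding path_edges_def by auto
  have cycle: "parpow par (Suc m) j = Some j"
    using assms m by (simp add: parpow_Suc_left del: parpow.simps(2))
  have iterate: "parpow par (n * Suc m) j = Some j" for n
  proof (induction n)
    case (Suc n)
    have "parpow par (Suc n * Suc m) j = parpow par (n * Suc m + Suc m) j"
      by (metis mult_Suc add.commute)
    also have "\<dots> = Some j" using parpow_add[OF Suc.IH] cycle by simp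
    finally show ?case .
  qed simp
  obtain K where K: "parpow par K j = None" using radial unfolding is_radial_def by auto
  have "parpow par (K + (K * Suc m - K)) j = None" by (rule parpow_None_add[OF K])
  then show False using iterate[of K] by simp
qed

lemma path_edges_subset: "c \<in> P k \<Longrightarrow> P c \<subseteq> P k"
  unfolding path_edges_def
proof safe
  fix m x l assume "parpow par m k = Some c" "parpow par l c = Some x"
  then show "\<exists>m. parpow par m k = Some x" using parpow_add by metis
qed

lemma child_on_path_unique:
  assumes "par c1 = Some i" "par c2 = Some i" "c1 \<in> P k" "c2 \<in> P k"
  shows "c1 = c2"
proof -
  have "c1 = c2" if h: "par c1 = Some i" "par c2 = Some i"
     "parpow par m1 k = Some c1" "parpow par m2 k = Some c2" "m1 \<le> m2" for c1 c2 m1 m2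
  proof (cases "m2 - m1")
    case 0 then show ?thesis using h by simp
  next
    case (Suc n)
    have "parpow par m2 k = parpow par (m2 - m1) c1"
      using parpow_add[OF h(3), of "m2 - m1"] h(5) by simp
    then have "parpow par n i = Some c2"
      using h Suc by (simp add: parpow_Suc_left del: parpow.simps(2))
    then have "c2 \<in> P i" unfolding path_edges_def by auto
    then show ?thesis using not_in_path_edges_parent[OF h(2)] by simp
  qed
  moreover obtain m1 m2 where "parpow par m1 k = Some c1" "parpow par m2 k = Some c2"
    using assms unfolding path_edges_def by auto
  ultimately show ?thesis using assms by (metis nle_le)
qed

lemma child_on_path_exists:
  assumes "i \<in> P k" "k \<noteq> i" shows "\<exists>c. par c = Some i \<and> c \<in> P k"
proof -
  obtain m where m: "parpow par m k = Some i" using assms unfolding path_edges_def by auto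
  then obtain n where "m = Suc n" using assms by (cases m) auto
  then obtain c where "parpow par n k = Some c" "par c = Some i"
    using m by (cases "parpow par n k") auto
  then show ?thesis unfolding path_edges_def by auto
qed

lemma subtree_decomp: "subtree i = insert i (\<Union>c\<in>C i. subtree c)"
proof safe
  fix k assume "k \<in> subtree i" "k \<notin> (\<Union>c\<in>C i. subtree c)"
  then show "k = i" using child_on_path_exists unfolding subtree_def children_def by blast
next
  show "i \<in> subtree i" unfolding subtree_def by (simp add: path_edges_self)
next
  fix k c assume "c \<in> C i" "k \<in> subtree c"
  then show "k \<in> subtree i"
    using path_edges_subset path_edges_parent[of c i] path_edges_self[of i]
    unfolding subtree_def children_def by auto
qed

lemma subtree_child_subset: "c \<in> C i \<Longrightarrow> subtree c \<subseteq> subtree i"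
  using subtree_decomp by blast

lemma not_in_subtree_child: "c \<in> C i \<Longrightarrow> i \<notin> subtree c"
  using not_in_path_edges_parent unfolding subtree_def children_def by auto

lemma disjoint_subtrees_children: "disjoint_family_on subtree (C i)"
  using child_on_path_unique unfolding disjoint_family_on_def subtree_def children_def by blast

lemma compl_subtree_child:
  assumes "par j = Some i"
  shows "- subtree j = insert i (\<Union>c\<in>C i - {j}. subtree c) \<union> - subtree i"
proof -
  have j: "j \<in> C i" using assms unfolding children_def by simp
  show ?thesis
    using not_in_subtree_child[OF j] subtree_child_subset[OF j] subtree_decomp[of i]
      disjoint_subtrees_children[of i] j
    unfolding disjoint_family_on_def by blast
qed

lemma path_matrix_nth: "path_matrix par w $ a $ b = 2 * sum w (P a \<inter> P b)"
  unfolding path_matrix_def by simp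

lemma path_matrix_sym: "path_matrix par w $ a $ b = path_matrix par w $ b $ a"
  unfolding path_matrix_nth by (simp add: Int_commute)

lemma path_matrix_nonneg: "(\<And>k. w k \<ge> 0) \<Longrightarrow> path_matrix par w $ a $ b \<ge> 0"
  unfolding path_matrix_nth by (simp add: sum_nonneg)

lemma path_matrix_subtree:
  "k \<in> subtree i \<Longrightarrow> path_matrix par w $ i $ k = path_matrix par w $ i $ i"
  unfolding path_matrix_nth subtree_def using path_edges_subset by (simp add: Int_absorb2)

lemma path_matrix_child_outside:
  "par j = Some i \<Longrightarrow> k \<notin> subtree j \<Longrightarrow> path_matrix par w $ j $ k = path_matrix par w $ i $ k"
  unfolding path_matrix_nth subtree_def using path_edges_parent[of j i] by simp

lemma path_matrix_root_outside:
  "par j = None \<Longrightarrow> k \<notin> subtree j \<Longrightarrow> path_matrix par w $ j $ k = 0"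
  unfolding path_matrix_nth subtree_def using path_edges_root by simp

lemma tree_dist_subtree: "k \<in> subtree i \<Longrightarrow> tree_dist par i k = card (P k - P i)"
  unfolding tree_dist_def subtree_def using path_edges_subset[of i k] by simp

lemma tree_dist_child_subtree:
  assumes "c \<in> C i" "k \<in> subtree c"
  shows "tree_dist par i k = tree_dist par c k + 1"
proof -
  have c: "par c = Some i" using assms unfolding children_def by simp
  have "P k - P i = insert c (P k - P c)"
    using assms path_edges_parent[OF c] not_in_path_edges_parent[OF c] unfolding subtree_def by auto
  moreover have "c \<notin> P k - P c" using path_edges_self by auto
  moreover have "k \<in> subtree i" using assms subtree_child_subset by blast
  ultimately show ?thesis using assms by (simp add: tree_dist_subtree)
qed

lemma tree_dist_parent_outside:
  assumes "par j = Some i" "k \<notin> subtree i"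
  shows "tree_dist par j k = tree_dist par i k + 1"
proof -
  have jk: "j \<notin> P k"
    using assms path_edges_subset[of j k] path_edges_parent[of j i] path_edges_self[of i]
    unfolding subtree_def by auto
  have "P j - P k = insert j (P i - P k)" using path_edges_parent[OF assms(1)] jk by auto
  moreover have "j \<notin> P i - P k" using not_in_path_edges_parent[OF assms(1)] by simp
  moreover have "P k - P j = P k - P i" using path_edges_parent[OF assms(1)] jk by auto
  ultimately show ?thesis unfolding tree_dist_def by simp
qed

lemma tree_dist_outside_pos: "k \<notin> subtree j \<Longrightarrow> 1 \<le> tree_dist par j k"
proof -
  assume "k \<notin> subtree j"
  then have "j \<in> P j - P k" using path_edges_self unfolding subtree_def by auto
  then have "card (P j - P k) > 0" by (simp add: card_gt_0_iff) blast
  then show ?thesis unfolding tree_dist_def by simp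
qed

lemma tree_dist_sibling_subtree:
  assumes "par j = Some i" "c \<in> C i" "c \<noteq> j" "k \<in> subtree c"
  shows "tree_dist par j k = tree_dist par c k + 2"
proof -
  have j: "j \<in> C i" using assms unfolding children_def by simp
  have "k \<notin> subtree j"
    using disjoint_subtrees_children[of i] assms j unfolding disjoint_family_on_def by blast
  moreover have "k \<in> subtree i" using assms(2,4) subtree_child_subset by blast
  ultimately have "k \<notin> subtree j" "i \<in> P k" unfolding subtree_def by auto
  then have "P j - P k = {j}" "P k - P j = P k - P i"
    using path_edges_parent[OF assms(1)] path_edges_subset[of i k] unfolding subtree_def by auto
  then have "tree_dist par j k = card (P k - P i) + 1" unfolding tree_dist_def by simp
  also have "\<dots> = tree_dist par c k + 2"
    using tree_dist_child_subtree[OF assms(2,4)] assms(2,4) subtree_child_subset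
    by (simp add: tree_dist_subtree subset_iff)
  finally show ?thesis .
qed

lemma tree_dist_parent: "par j = Some i \<Longrightarrow> tree_dist par j i = 1"
proof -
  assume j: "par j = Some i"
  have "P j - P i = {j}" "P i - P j = {}"
    using path_edges_parent[OF j] not_in_path_edges_parent[OF j] by auto
  then show ?thesis unfolding tree_dist_def by simp
qed

end

section \<open>Sums of stale dual variables\<close>

locale dual_trajectory =
  fixes lam :: "nat \<Rightarrow> 'n::finite \<Rightarrow> real"
  assumes lam_0: "\<And>k. lam 0 k = 0"
begin

definition lam_at :: "int \<Rightarrow> 'n \<Rightarrow> real" where
  "lam_at s k = (if s < 0 then 0 else lam (nat s) k)"

lemma lam_at_nonpos: "s \<le> 0 \<Longrightarrow> lam_at s k = 0"
  by (cases "s = 0") (auto simp: lam_at_def lam_0)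

lemma lam_at_of_nat [simp]: "lam_at (int n) k = lam n k"
  by (simp add: lam_at_def)

text \<open>The invariant of all messages: \<open>v\<close> is a \<open>w\<close>-weighted sum over \<open>S\<close> of entries \<open>\<lambda>\<^sub>k\<close>, each
  read at some time at most \<open>lag k\<close> steps before \<open>s\<close>; negative times stand for the initial zeros.\<close>
definition delayed_sum :: "('n \<Rightarrow> real) \<Rightarrow> 'n set \<Rightarrow> nat \<Rightarrow> ('n \<Rightarrow> int) \<Rightarrow> real \<Rightarrow> bool" where
  "delayed_sum w S s lag v \<longleftrightarrow> (\<exists>\<sigma>. v = (\<Sum>k\<in>S. w k * lam_at (\<sigma> k) k)
      \<and> (\<forall>k\<in>S. int s - lag k \<le> \<sigma> k \<and> \<sigma> k \<le> int s))"

lemma delayed_sum_zero: "(\<And>k. k \<in> S \<Longrightarrow> int s \<le> lag k) \<Longrightarrow> delayed_sum w S s lag 0"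
  unfolding delayed_sum_def by (intro exI[of _ "\<lambda>_. 0"]) (simp add: lam_at_nonpos)

lemma delayed_sum_zero_weights:
  "(\<And>k. k \<in> S \<Longrightarrow> w k = 0) \<Longrightarrow> (\<And>k. k \<in> S \<Longrightarrow> 0 \<le> lag k) \<Longrightarrow> delayed_sum w S s lag 0"
  unfolding delayed_sum_def by (intro exI[of _ "\<lambda>_. int s"]) simp

lemma delayed_sum_singleton: "0 \<le> lag i \<Longrightarrow> delayed_sum w {i} s lag (w i * lam s i)"
  unfolding delayed_sum_def by (intro exI[of _ "\<lambda>_. int s"]) simp

lemma delayed_sum_scale:
  "delayed_sum w S s lag v \<Longrightarrow> delayed_sum (\<lambda>k. a * w k) S s lag (a * v)"
  unfolding delayed_sum_def by (auto simp: sum_distrib_left mult.assoc)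

lemma delayed_sum_later:
  assumes "delayed_sum w S m lag v" "m \<le> s"
    and "\<And>k. k \<in> S \<Longrightarrow> w k = w' k"
    and "\<And>k. k \<in> S \<Longrightarrow> lag k + int (s - m) \<le> lag' k"
  shows "delayed_sum w' S s lag' v"
proof -
  obtain \<sigma> where v: "v = (\<Sum>k\<in>S. w k * lam_at (\<sigma> k) k)"
    and \<sigma>: "\<forall>k\<in>S. int m - lag k \<le> \<sigma> k \<and> \<sigma> k \<le> int m"
    using assms(1) unfolding delayed_sum_def by blast
  have "v = (\<Sum>k\<in>S. w' k * lam_at (\<sigma> k) k)" unfolding v using assms(3) by simp
  moreover have "int s - lag' k \<le> \<sigma> k \<and> \<sigma> k \<le> int s" if "k \<in> S" for k
    using \<sigma> assms(2) assms(4)[OF that] that by auto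
  ultimately show ?thesis unfolding delayed_sum_def by blast
qed

lemma delayed_sum_Un:
  assumes "S \<inter> T = {}" "delayed_sum w S s lag u" "delayed_sum w T s lag v"
  shows "delayed_sum w (S \<union> T) s lag (u + v)"
proof -
  obtain \<sigma> \<rho> where u: "u = (\<Sum>k\<in>S. w k * lam_at (\<sigma> k) k)"
      and v: "v = (\<Sum>k\<in>T. w k * lam_at (\<rho> k) k)"
      and "\<forall>k\<in>S. int s - lag k \<le> \<sigma> k \<and> \<sigma> k \<le> int s"
      and "\<forall>k\<in>T. int s - lag k \<le> \<rho> k \<and> \<rho> k \<le> int s"
    using assms(2,3) unfolding delayed_sum_def by blast
  moreover define \<tau> where "\<tau> k = (if k \<in> S then \<sigma> k else \<rho> k)" for k
  moreover have "u + v = (\<Sum>k\<in>S \<union> T. w k * lam_at (\<tau> k) k)"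
    unfolding u v \<tau>_def using assms(1)
    by (subst sum.union_disjoint) (auto intro!: sum.cong)
  ultimately show ?thesis unfolding delayed_sum_def by (intro exI[of _ \<tau>]) auto
qed

lemma delayed_sum_UNION:
  assumes "finite I" "disjoint_family_on S I"
    and "\<And>c. c \<in> I \<Longrightarrow> delayed_sum w (S c) s lag (v c)"
  shows "delayed_sum w (\<Union>c\<in>I. S c) s lag (\<Sum>c\<in>I. v c)"
  using assms
proof (induction I rule: finite_induct)
  case empty then show ?case by (simp add: delayed_sum_def)
next
  case (insert c I)
  have "S c \<inter> S c' = {}" if "c' \<in> I" for c'
    using insert.prems(1) insert.hyps(2) that unfolding disjoint_family_on_def by fastforce
  then have disj: "S c \<inter> (\<Union>c\<in>I. S c) = {}" by blast
  have "disjoint_family_on S I"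
    using insert.prems(1) by (rule disjoint_family_on_mono[OF subset_insertI])
  then have "delayed_sum w (\<Union>c\<in>I. S c) s lag (\<Sum>c\<in>I. v c)"
    using insert.IH insert.prems(2) by blast
  then have "delayed_sum w (S c \<union> (\<Union>c\<in>I. S c)) s lag (v c + (\<Sum>c\<in>I. v c))"
    using delayed_sum_Un[OF disj] insert.prems(2) by blast
  then show ?case using insert.hyps by simp
qed

lemma delayed_sum_received:
  assumes sent: "\<And>m. m \<le> s \<Longrightarrow> delayed_sum w S m lag (x m)"
    and lag: "\<And>k. k \<in> S \<Longrightarrow> 0 \<le> lag k" "\<And>k. k \<in> S \<Longrightarrow> lag k + int tm \<le> lag' k"
    and received: "(\<exists>m. y = x m \<and> m \<le> s \<and> s \<le> m + tm) \<or> (y = 0 \<and> s \<le> tm)"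
  shows "delayed_sum w S s lag' y"
  using received
proof (elim disjE exE conjE)
  fix m assume "y = x m" "m \<le> s" "s \<le> m + tm"
  then have "lag k + int (s - m) \<le> lag' k" if "k \<in> S" for k
    using lag(2)[OF that] by linarith
  with \<open>m \<le> s\<close> show ?thesis
    unfolding \<open>y = x m\<close> by (intro delayed_sum_later[OF sent]) auto
next
  assume "y = 0" "s \<le> tm"
  have "int s \<le> lag' k" if "k \<in> S" for k
    using lag(1)[OF that] lag(2)[OF that] \<open>s \<le> tm\<close> by linarith
  then show ?thesis unfolding \<open>y = 0\<close> by (rule delayed_sum_zero)
qed

end

section \<open>Messages of DIST-OPT\<close>

lemma delayed_copy_cases:
  fixes y x :: "nat \<Rightarrow> 'a::zero"
  assumes "y 0 = 0" "\<And>s. y (Suc s) = (if tau s \<le> Suc s then x (Suc s - tau s) else 0)"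
    and "\<And>s. tau s \<le> tm"
  shows "(\<exists>m. y s = x m \<and> m \<le> s \<and> s \<le> m + tm) \<or> (y s = 0 \<and> s \<le> tm)"
proof (cases s)
  case (Suc s')
  show ?thesis
  proof (cases "tau s' \<le> Suc s'")
    case True
    then show ?thesis using assms(2,3)[of s'] Suc by (intro disjI1 exI[of _ "s - tau s'"]) auto
  next
    case False
    then show ?thesis using assms(2,3)[of s'] Suc by simp
  qed
qed (simp add: assms(1))

locale upward_messages = radial_network par + dual_trajectory lam
  for par :: "'n::finite \<Rightarrow> 'n option" and lam :: "nat \<Rightarrow> 'n \<Rightarrow> real" +
  fixes alpha ahat :: "nat \<Rightarrow> real^'n" and tau_up :: "'n \<Rightarrow> nat \<Rightarrow> nat" and tm :: nat
  assumes alpha_0: "alpha 0 = 0" and ahat_0: "ahat 0 = 0"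
    and step_alpha: "\<And>s i. alpha (Suc s) $ i = lam (Suc s) i + (\<Sum>j\<in>C i. ahat s $ j)"
    and step_ahat: "\<And>s j. par j \<noteq> None \<Longrightarrow>
       ahat (Suc s) $ j = (if tau_up j s \<le> Suc s then alpha (Suc s - tau_up j s) $ j else 0)"
    and delay_up: "\<And>j s. tau_up j s \<le> tm"
begin

text \<open>Each hop of the tree costs one iteration plus at most \<open>tm\<close> steps of delay.\<close>
definition hop_lag :: "'n \<Rightarrow> 'n \<Rightarrow> int" where
  "hop_lag i k = int (tree_dist par i k) * (int tm + 1)"

lemma hop_lag_nonneg: "0 \<le> hop_lag i k"
  by (simp add: hop_lag_def)

lemma hop_lag_outside: "k \<notin> subtree j \<Longrightarrow> int tm + 1 \<le> hop_lag j k"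
proof -
  assume "k \<notin> subtree j"
  then have "1 * (int tm + 1) \<le> int (tree_dist par j k) * (int tm + 1)"
    using tree_dist_outside_pos by (intro mult_right_mono) auto
  then show ?thesis by (simp add: hop_lag_def algebra_simps)
qed

lemma hop_lag_add:
  "tree_dist par i k = tree_dist par c k + n \<Longrightarrow> hop_lag i k = hop_lag c k + int n * (int tm + 1)"
  by (simp add: hop_lag_def algebra_simps)

lemma ahat_received:
  assumes "par j \<noteq> None"
  shows "(\<exists>m. ahat s $ j = alpha m $ j \<and> m \<le> s \<and> s \<le> m + tm) \<or> (ahat s $ j = 0 \<and> s \<le> tm)"
  using delayed_copy_cases[of "\<lambda>s. ahat s $ j" "tau_up j" "\<lambda>m. alpha m $ j" tm s]
  by (simp add: ahat_0 step_ahat[OF assms] delay_up)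

lemma delayed_sum_children:
  assumes "C' \<subseteq> C i" "s' \<le> s"
    and ahat: "\<And>c. c \<in> C' \<Longrightarrow> delayed_sum (\<lambda>_. 1) (subtree c) s' (\<lambda>k. hop_lag c k + int tm) (ahat s' $ c)"
    and lag: "\<And>c k. c \<in> C' \<Longrightarrow> k \<in> subtree c \<Longrightarrow> hop_lag c k + int tm + int (s - s') \<le> lag k"
  shows "delayed_sum (\<lambda>_. 1) (\<Union>c\<in>C'. subtree c) s lag (\<Sum>c\<in>C'. ahat s' $ c)"
proof (rule delayed_sum_UNION)
  show "disjoint_family_on subtree C'"
    by (rule disjoint_family_on_mono[OF assms(1) disjoint_subtrees_children])
  show "delayed_sum (\<lambda>_. 1) (subtree c) s lag (ahat s' $ c)" if "c \<in> C'" for c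
    using ahat[OF that] assms(2) by (rule delayed_sum_later) (use lag that in auto)
qed simp

lemma alpha_delayed: "delayed_sum (\<lambda>_. 1) (subtree j) s (hop_lag j) (alpha s $ j)"
proof (induction s arbitrary: j rule: less_induct)
  case (less s)
  show ?case
  proof (cases s)
    case 0 then show ?thesis by (simp add: alpha_0 delayed_sum_zero hop_lag_nonneg)
  next
    case (Suc s')
    have ahat: "delayed_sum (\<lambda>_. 1) (subtree c) s' (\<lambda>k. hop_lag c k + int tm) (ahat s' $ c)"
      if "c \<in> C j" for c
    proof (rule delayed_sum_received[where lag = "hop_lag c"])
      show "(\<exists>m. ahat s' $ c = alpha m $ c \<and> m \<le> s' \<and> s' \<le> m + tm) \<or> (ahat s' $ c = 0 \<and> s' \<le> tm)"
        using that by (intro ahat_received) (simp add: children_def)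
    qed (use less.IH Suc hop_lag_nonneg in auto)
    have "delayed_sum (\<lambda>_. 1) (\<Union>c\<in>C j. subtree c) s (hop_lag j) (\<Sum>c\<in>C j. ahat s' $ c)"
      by (rule delayed_sum_children[OF order_refl _ ahat])
        (simp_all add: Suc hop_lag_add[OF tree_dist_child_subtree])
    then have "delayed_sum (\<lambda>_. 1) ({j} \<union> (\<Union>c\<in>C j. subtree c)) s (hop_lag j)
        (1 * lam s j + (\<Sum>c\<in>C j. ahat s' $ c))"
      using not_in_subtree_child hop_lag_nonneg by (intro delayed_sum_Un delayed_sum_singleton) auto
    then show ?thesis using subtree_decomp[of j] step_alpha Suc by simp
  qed
qed

lemma ahat_delayed:
  "par j \<noteq> None \<Longrightarrow> delayed_sum (\<lambda>_. 1) (subtree j) s (\<lambda>k. hop_lag j k + int tm) (ahat s $ j)"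
  by (rule delayed_sum_received[OF alpha_delayed hop_lag_nonneg _ ahat_received]) simp_all


end

locale downward_messages = upward_messages par lam alpha ahat tau_up tm
  for par :: "'n::finite \<Rightarrow> 'n option" and lam alpha ahat tau_up tm +
  fixes w :: "'n \<Rightarrow> real" and beta bhat z :: "nat \<Rightarrow> real^'n"
    and tau_down :: "'n \<Rightarrow> nat \<Rightarrow> nat"
  assumes beta_0: "beta 0 = 0" and bhat_0: "bhat 0 = 0" and z_0: "z 0 = 0"
    and root_bhat: "\<And>i s. par i = None \<Longrightarrow> bhat s $ i = 0"
    and step_beta: "\<And>s i j. par j = Some i \<Longrightarrow> beta (Suc s) $ j
       = path_matrix par w $ i $ i * (lam (Suc s) i + (\<Sum>k\<in>C i - {j}. ahat s $ k)) + bhat s $ i"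
    and step_bhat: "\<And>s j. par j \<noteq> None \<Longrightarrow>
       bhat (Suc s) $ j = (if tau_down j s \<le> Suc s then beta (Suc s - tau_down j s) $ j else 0)"
    and step_z: "\<And>s i. z (Suc s) $ i
       = path_matrix par w $ i $ i * (lam (Suc s) i + (\<Sum>j\<in>C i. ahat (Suc s) $ j)) + bhat (Suc s) $ i"
    and delay_down: "\<And>j s. tau_down j s \<le> tm"
begin

abbreviation M where "M \<equiv> path_matrix par w"

lemma bhat_received:
  assumes "par j \<noteq> None"
  shows "(\<exists>m. bhat s $ j = beta m $ j \<and> m \<le> s \<and> s \<le> m + tm) \<or> (bhat s $ j = 0 \<and> s \<le> tm)"
  using delayed_copy_cases[of "\<lambda>s. bhat s $ j" "tau_down j" "\<lambda>m. beta m $ j" tm s]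
  by (simp add: bhat_0 step_bhat[OF assms] delay_down)

lemma bhat_delayed_if_beta:
  assumes beta: "\<And>m i. m \<le> s \<Longrightarrow> par j = Some i \<Longrightarrow>
      delayed_sum (\<lambda>k. M $ j $ k) (- subtree j) m (\<lambda>k. hop_lag j k - (int tm + 1)) (beta m $ j)"
  shows "delayed_sum (\<lambda>k. M $ j $ k) (- subtree j) s (\<lambda>k. hop_lag j k - 1) (bhat s $ j)"
proof (cases "par j")
  case None
  have "delayed_sum (\<lambda>k. M $ j $ k) (- subtree j) s (\<lambda>k. hop_lag j k - 1) 0"
    using None path_matrix_root_outside hop_lag_outside[of _ j]
    by (intro delayed_sum_zero_weights) force+
  then show ?thesis using root_bhat[OF None] by simp
next
  case (Some i)
  show ?thesis
  proof (rule delayed_sum_received[where lag = "\<lambda>k. hop_lag j k - (int tm + 1)"])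
    show "(\<exists>m. bhat s $ j = beta m $ j \<and> m \<le> s \<and> s \<le> m + tm) \<or> (bhat s $ j = 0 \<and> s \<le> tm)"
      using Some by (intro bhat_received) simp
  qed (use beta Some hop_lag_outside in force)+
qed

lemma delayed_sum_node_update:
  assumes "C' \<subseteq> C i" "s' \<le> s" "0 \<le> lag i"
    and lag: "\<And>c k. c \<in> C' \<Longrightarrow> k \<in> subtree c \<Longrightarrow> hop_lag c k + int tm + int (s - s') \<le> lag k"
    and v: "delayed_sum (\<lambda>k. M $ i $ k) (- subtree i) s lag v"
  shows "delayed_sum (\<lambda>k. M $ i $ k) (insert i (\<Union>c\<in>C'. subtree c) \<union> - subtree i) s lag
      (M $ i $ i * (lam s i + (\<Sum>c\<in>C'. ahat s' $ c)) + v)"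
proof -
  have sub: "\<Union>(subtree ` C') \<subseteq> subtree i" using assms(1) subtree_child_subset by blast
  have "delayed_sum (\<lambda>_. 1) (\<Union>c\<in>C'. subtree c) s lag (\<Sum>c\<in>C'. ahat s' $ c)"
    using assms(1) by (intro delayed_sum_children[OF assms(1,2) ahat_delayed lag])
      (auto simp: children_def)
  then have "delayed_sum (\<lambda>k. M $ i $ k) (\<Union>c\<in>C'. subtree c) s lag (M $ i $ i * (\<Sum>c\<in>C'. ahat s' $ c))"
    using sub by (intro delayed_sum_later[OF delayed_sum_scale]) (auto simp: path_matrix_subtree)
  moreover have "delayed_sum (\<lambda>k. M $ i $ k) {i} s lag (M $ i $ i * lam s i)"
    using assms(3) by (rule delayed_sum_singleton)
  ultimately have "delayed_sum (\<lambda>k. M $ i $ k) ({i} \<union> (\<Union>c\<in>C'. subtree c)) s lag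
      (M $ i $ i * lam s i + M $ i $ i * (\<Sum>c\<in>C'. ahat s' $ c))"
    using assms(1) not_in_subtree_child by (intro delayed_sum_Un) auto
  then have "delayed_sum (\<lambda>k. M $ i $ k) (({i} \<union> (\<Union>c\<in>C'. subtree c)) \<union> - subtree i) s lag
      (M $ i $ i * lam s i + M $ i $ i * (\<Sum>c\<in>C'. ahat s' $ c) + v)"
    using sub subtree_decomp[of i] by (intro delayed_sum_Un[OF _ _ v]) auto
  then show ?thesis by (simp add: distrib_left)
qed

text \<open>\<open>\<beta>\<^sub>j\<close> is assembled at the parent of \<open>j\<close>, one hop closer to every node outside the subtree
  of \<open>j\<close>.\<close>
lemma beta_delayed:
  "par j = Some i \<Longrightarrow>
    delayed_sum (\<lambda>k. M $ j $ k) (- subtree j) s (\<lambda>k. hop_lag j k - (int tm + 1)) (beta s $ j)"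
proof (induction s arbitrary: i j rule: less_induct)
  case (less s)
  note j = \<open>par j = Some i\<close>
  show ?case
  proof (cases s)
    case 0
    have "int s \<le> hop_lag j k - (int tm + 1)" if "k \<in> - subtree j" for k
      using 0 hop_lag_outside that by force
    then have "delayed_sum (\<lambda>k. M $ j $ k) (- subtree j) s (\<lambda>k. hop_lag j k - (int tm + 1)) 0"
      by (rule delayed_sum_zero)
    with 0 show ?thesis by (simp add: beta_0)
  next
    case (Suc s')
    have lag_parent: "hop_lag j k = hop_lag i k + int tm + 1" if "k \<notin> subtree i" for k
      using hop_lag_add[OF tree_dist_parent_outside[OF j that]] by simp
    have "delayed_sum (\<lambda>k. M $ i $ k) (- subtree i) s' (\<lambda>k. hop_lag i k - 1) (bhat s' $ i)"
      using less.IH Suc by (intro bhat_delayed_if_beta) auto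
    then have bhat: "delayed_sum (\<lambda>k. M $ i $ k) (- subtree i) s (\<lambda>k. hop_lag j k - (int tm + 1))
        (bhat s' $ i)"
      by (rule delayed_sum_later) (simp_all add: Suc lag_parent)
    have "delayed_sum (\<lambda>k. M $ i $ k) (insert i (\<Union>c\<in>C i - {j}. subtree c) \<union> - subtree i) s
        (\<lambda>k. hop_lag j k - (int tm + 1)) (beta s $ j)"
      unfolding Suc step_beta[OF j]
    proof (rule delayed_sum_node_update[OF _ _ _ _ bhat[unfolded Suc]])
      show "hop_lag c k + int tm + int (Suc s' - s') \<le> hop_lag j k - (int tm + 1)"
        if "c \<in> C i - {j}" "k \<in> subtree c" for c k
        using that hop_lag_add[OF tree_dist_sibling_subtree[OF j, of c k]] by simp
    qed (simp_all add: hop_lag_def tree_dist_parent[OF j])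
    then show ?thesis
      unfolding compl_subtree_child[OF j, symmetric]
      by (rule delayed_sum_later) (simp_all add: path_matrix_child_outside[OF j])
  qed
qed

lemma bhat_delayed: "delayed_sum (\<lambda>k. M $ j $ k) (- subtree j) s (\<lambda>k. hop_lag j k - 1) (bhat s $ j)"
  by (rule bhat_delayed_if_beta[OF beta_delayed])

lemma z_delayed: "delayed_sum (\<lambda>k. M $ i $ k) UNIV s (hop_lag i) (z s $ i)"
proof (cases s)
  case 0 then show ?thesis by (simp add: z_0 delayed_sum_zero hop_lag_nonneg)
next
  case (Suc s')
  have bhat: "delayed_sum (\<lambda>k. M $ i $ k) (- subtree i) s (hop_lag i) (bhat s $ i)"
    by (rule delayed_sum_later[OF bhat_delayed]) simp_all
  have "delayed_sum (\<lambda>k. M $ i $ k) (insert i (\<Union>c\<in>C i. subtree c) \<union> - subtree i) s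
      (hop_lag i) (z s $ i)"
    unfolding Suc step_z
    by (rule delayed_sum_node_update[OF order_refl order_refl _ _ bhat[unfolded Suc]])
      (auto simp: hop_lag_nonneg hop_lag_add[OF tree_dist_child_subtree])
  moreover have "insert i (\<Union>c\<in>C i. subtree c) \<union> - subtree i = UNIV"
    using subtree_decomp[of i] by blast
  ultimately show ?thesis by simp
qed

end

section \<open>The dual function and its gradient\<close>

lemma clamp_bounds: "lo \<le> hi \<Longrightarrow> lo \<le> clamp x lo hi \<and> clamp x lo hi \<le> hi"
  unfolding clamp_def by auto

lemma clamp_lipschitz: "\<bar>clamp x lo hi - clamp y lo hi\<bar> \<le> \<bar>x - y\<bar>"
  unfolding clamp_def by (auto simp: min_def max_def)

text \<open>The quadratic is \<open>a/2 (x - c)\<^sup>2\<close> up to a constant, with \<open>c = (z - b)/a\<close>, and clamping \<open>c\<close>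
  into the interval moves it to the closest admissible point.\<close>
lemma clamp_minimizes_quadratic:
  fixes a b z lo hi x :: real
  assumes a: "a > 0" and "lo \<le> x" "x \<le> hi"
  shows "a/2 * (clamp ((z - b)/a) lo hi)\<^sup>2 + b * clamp ((z - b)/a) lo hi - z * clamp ((z - b)/a) lo hi
       \<le> a/2 * x\<^sup>2 + b * x - z * x"
proof -
  define c where "c = (z - b)/a"
  define y where "y = clamp c lo hi"
  have z: "z = b + a * c" using a by (simp add: c_def)
  have "\<bar>y - c\<bar> \<le> \<bar>x - c\<bar>" using assms unfolding y_def clamp_def by (auto simp: min_def max_def)
  then have "(y - c)\<^sup>2 \<le> (x - c)\<^sup>2" by (simp add: abs_le_square_iff)
  then have "a/2 * (y - c)\<^sup>2 \<le> a/2 * (x - c)\<^sup>2" using a by simp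
  then have "a/2 * y\<^sup>2 + b * y - z * y \<le> a/2 * x\<^sup>2 + b * x - z * x"
    unfolding z by (simp add: power2_eq_square algebra_simps)
  then show ?thesis unfolding y_def c_def .
qed

lemma spec_norm_nonneg: "0 \<le> spec_norm M"
  unfolding spec_norm_def by (rule onorm_pos_le) simp

lemma norm_mult_vec_le_spec_norm: "norm (M *v x) \<le> spec_norm M * norm x"
  unfolding spec_norm_def by (rule onorm) simp

definition dual_price :: "real^'n^'n \<Rightarrow> (real^'n) \<times> (real^'n) \<Rightarrow> real^'n" where
  "dual_price M \<mu> = (fst \<mu> - snd \<mu>) v* M"

definition primal_response ::
  "real^'n^'n \<Rightarrow> real^'n \<Rightarrow> real^'n \<Rightarrow> real^'n \<Rightarrow> real^'n \<Rightarrow> (real^'n) \<times> (real^'n) \<Rightarrow> real^'n" where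
  "primal_response M a b lo hi \<mu> = (\<chi> i. clamp ((dual_price M \<mu> $ i - b $ i) / a $ i) (lo $ i) (hi $ i))"

definition lagrangian where
  "lagrangian R X v0 vlo vhi aP bP cP aQ bQ cQ \<mu> p q =
     quad_cost aP bP cP p + quad_cost aQ bQ cQ q
       + inner (fst \<mu>) (vlo - voltage R X v0 p q) + inner (snd \<mu>) (voltage R X v0 p q - vhi)"

lemma lagrangian_separable:
  fixes R X :: "real^'n::finite^'n"
  shows "lagrangian R X v0 vlo vhi aP bP cP aQ bQ cQ \<mu> p q =
     (\<Sum>i\<in>UNIV. aP$i/2 * (p$i)\<^sup>2 + bP$i * p$i - dual_price R \<mu> $ i * p$i)
   + (\<Sum>i\<in>UNIV. aQ$i/2 * (q$i)\<^sup>2 + bQ$i * q$i - dual_price X \<mu> $ i * q$i)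
   + ((\<Sum>i\<in>UNIV. cP$i) + (\<Sum>i\<in>UNIV. cQ$i)
      + inner (fst \<mu>) (vlo - (\<chi> i. v0)) + inner (snd \<mu>) ((\<chi> i. v0) - vhi))"
proof -
  have price: "inner (fst \<mu>) (M *v y) - inner (snd \<mu>) (M *v y) = (\<Sum>i\<in>UNIV. dual_price M \<mu> $ i * y$i)"
    for M :: "real^'n^'n" and y
  proof -
    have "inner (fst \<mu>) (M *v y) - inner (snd \<mu>) (M *v y) = inner (dual_price M \<mu>) y"
      by (simp add: dual_price_def dot_lmul_matrix inner_diff_left)
    then show ?thesis by (simp add: inner_vec_def)
  qed
  show ?thesis
    unfolding lagrangian_def voltage_def quad_cost_def
    using price[of R p] price[of X q]
    by (simp add: inner_diff_right inner_add_right sum.distrib sum_subtractf algebra_simps)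
qed

lemma primal_response_in_box: "(\<And>i. lo $ i \<le> hi $ i) \<Longrightarrow> primal_response M a b lo hi \<mu> \<in> vbox lo hi"
  unfolding primal_response_def vbox_def using clamp_bounds by simp

lemma primal_response_minimizes:
  assumes "\<And>i. a $ i > 0" "y \<in> vbox lo hi"
  shows "(\<Sum>i\<in>UNIV. a$i/2 * (primal_response M a b lo hi \<mu> $ i)\<^sup>2 + b$i * primal_response M a b lo hi \<mu> $ i
            - dual_price M \<mu> $ i * primal_response M a b lo hi \<mu> $ i)
     \<le> (\<Sum>i\<in>UNIV. a$i/2 * (y$i)\<^sup>2 + b$i * y$i - dual_price M \<mu> $ i * y$i)"
proof (rule sum_mono)
  fix i
  have "lo $ i \<le> y $ i" "y $ i \<le> hi $ i" using assms(2) by (auto simp: vbox_def)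
  then show "a$i/2 * (primal_response M a b lo hi \<mu> $ i)\<^sup>2 + b$i * primal_response M a b lo hi \<mu> $ i
            - dual_price M \<mu> $ i * primal_response M a b lo hi \<mu> $ i
     \<le> a$i/2 * (y$i)\<^sup>2 + b$i * y$i - dual_price M \<mu> $ i * y$i"
    unfolding primal_response_def using clamp_minimizes_quadratic[OF assms(1)] by simp
qed

context
  fixes R X :: "real^'n::finite^'n" and v0 :: real and vlo vhi plo phi qlo qhi aP bP cP aQ bQ cQ :: "real^'n"
  assumes aP: "\<And>i. aP $ i > 0" and aQ: "\<And>i. aQ $ i > 0"
    and p_le: "\<And>i. plo $ i \<le> phi $ i" and q_le: "\<And>i. qlo $ i \<le> qhi $ i"
begin

lemma lagrangian_response_le:
  assumes "p \<in> vbox plo phi" "q \<in> vbox qlo qhi"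
  shows "lagrangian R X v0 vlo vhi aP bP cP aQ bQ cQ \<mu>
      (primal_response R aP bP plo phi \<mu>) (primal_response X aQ bQ qlo qhi \<mu>)
    \<le> lagrangian R X v0 vlo vhi aP bP cP aQ bQ cQ \<mu> p q"
  unfolding lagrangian_separable
  using primal_response_minimizes[OF aP assms(1), where M = R and b = bP and \<mu> = \<mu>]
    primal_response_minimizes[OF aQ assms(2), where M = X and b = bQ and \<mu> = \<mu>]
  by linarith

lemma dual_fun_eq_lagrangian_response:
  "dual_fun R X v0 vlo vhi plo phi qlo qhi aP bP cP aQ bQ cQ \<mu>
    = lagrangian R X v0 vlo vhi aP bP cP aQ bQ cQ \<mu>
        (primal_response R aP bP plo phi \<mu>) (primal_response X aQ bQ qlo qhi \<mu>)"
  unfolding dual_fun_def lagrangian_def[symmetric]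
proof (rule cInf_eq_minimum)
  show "lagrangian R X v0 vlo vhi aP bP cP aQ bQ cQ \<mu>
      (primal_response R aP bP plo phi \<mu>) (primal_response X aQ bQ qlo qhi \<mu>)
    \<in> {lagrangian R X v0 vlo vhi aP bP cP aQ bQ cQ \<mu> p q | p q. p \<in> vbox plo phi \<and> q \<in> vbox qlo qhi}"
    using primal_response_in_box[OF p_le] primal_response_in_box[OF q_le] by blast
qed (use lagrangian_response_le in blast)

lemma lagrangian_affine_multiplier:
  "lagrangian R X v0 vlo vhi aP bP cP aQ bQ cQ \<mu> p q = lagrangian R X v0 vlo vhi aP bP cP aQ bQ cQ \<nu> p q
     + inner (\<mu> - \<nu>) (vlo - voltage R X v0 p q, voltage R X v0 p q - vhi)"
  by (cases \<mu>; cases \<nu>) (simp add: lagrangian_def inner_diff_left algebra_simps)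

text \<open>\<open>D\<close> is a minimum of functions affine in the multiplier, and at \<open>\<nu>\<close> the minimum is attained by the
  one with slope the constraint residual; so \<open>D - \<langle>residual, \<cdot>\<rangle>\<close> has a maximum at \<open>\<nu>\<close>, where its
  derivative must vanish.\<close>
lemma dual_gradient_eq:
  assumes "has_gradient (dual_fun R X v0 vlo vhi plo phi qlo qhi aP bP cP aQ bQ cQ) G \<nu>"
  shows "G = (vlo - voltage R X v0 (primal_response R aP bP plo phi \<nu>) (primal_response X aQ bQ qlo qhi \<nu>),
              voltage R X v0 (primal_response R aP bP plo phi \<nu>) (primal_response X aQ bQ qlo qhi \<nu>) - vhi)"
    (is "G = ?g")
proof -
  let ?D = "dual_fun R X v0 vlo vhi plo phi qlo qhi aP bP cP aQ bQ cQ"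
  let ?L = "lagrangian R X v0 vlo vhi aP bP cP aQ bQ cQ"
  let ?p = "primal_response R aP bP plo phi \<nu>" and ?q = "primal_response X aQ bQ qlo qhi \<nu>"
  define f where "f \<mu> = ?D \<mu> - inner ?g \<mu>" for \<mu>
  have "f \<mu> \<le> f \<nu>" for \<mu>
  proof -
    have "?D \<mu> \<le> ?L \<mu> ?p ?q"
      unfolding dual_fun_eq_lagrangian_response
      by (rule lagrangian_response_le[OF primal_response_in_box[OF p_le] primal_response_in_box[OF q_le]])
    also have "\<dots> = ?L \<nu> ?p ?q + inner (\<mu> - \<nu>) ?g"
      by (rule lagrangian_affine_multiplier)
    also have "\<dots> = ?D \<nu> + inner (\<mu> - \<nu>) ?g"
      by (simp only: dual_fun_eq_lagrangian_response)
    finally show ?thesis unfolding f_def by (simp add: inner_diff_left inner_commute)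
  qed
  moreover have "(f has_derivative (\<lambda>h. inner G h - inner ?g h)) (at \<nu>)"
    unfolding f_def using assms unfolding has_gradient_def
    by (intro has_derivative_diff has_derivative_inner_right[OF has_derivative_ident])
  ultimately have "(\<lambda>h. inner G h - inner ?g h) = (\<lambda>h. 0)"
    by (intro has_derivative_local_max) (auto intro: always_eventually)
  then have "inner G (G - ?g) - inner ?g (G - ?g) = 0" by meson
  then have "inner (G - ?g) (G - ?g) = 0" by (simp add: inner_diff_left)
  then show ?thesis by simp
qed

lemma dual_gradient_error_le:
  assumes G: "has_gradient (dual_fun R X v0 vlo vhi plo phi qlo qhi aP bP cP aQ bQ cQ) G \<nu>"
    and amin: "0 < amin"
    and p: "norm (p - primal_response R aP bP plo phi \<nu>) \<le> spec_norm R * A / amin"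
    and q: "norm (q - primal_response X aQ bQ qlo qhi \<nu>) \<le> spec_norm X * A / amin"
    and A: "A \<le> sqrt 2 * S"
  shows "norm (G - (vlo - voltage R X v0 p q, voltage R X v0 p q - vhi))
      \<le> 2 * ((spec_norm R)\<^sup>2 + (spec_norm X)\<^sup>2) / amin * S"
proof -
  let ?p = "primal_response R aP bP plo phi \<nu>" and ?q = "primal_response X aQ bQ qlo qhi \<nu>"
  let ?dV = "voltage R X v0 p q - voltage R X v0 ?p ?q"
  let ?c = "((spec_norm R)\<^sup>2 + (spec_norm X)\<^sup>2) / amin"
  have "G - (vlo - voltage R X v0 p q, voltage R X v0 p q - vhi) = (?dV, - ?dV)"
    unfolding dual_gradient_eq[OF G] by (simp add: algebra_simps)
  then have "norm (G - (vlo - voltage R X v0 p q, voltage R X v0 p q - vhi)) = sqrt (2 * (norm ?dV)\<^sup>2)"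
    by (simp add: norm_Pair norm_minus_commute)
  also have "\<dots> = sqrt 2 * norm ?dV" by (simp add: real_sqrt_mult)
  finally have G_err: "norm (G - (vlo - voltage R X v0 p q, voltage R X v0 p q - vhi)) = sqrt 2 * norm ?dV" .
  have "?dV = R *v (p - ?p) + X *v (q - ?q)"
    by (simp add: voltage_def matrix_vector_mult_diff_distrib algebra_simps)
  then have "norm ?dV \<le> norm (R *v (p - ?p)) + norm (X *v (q - ?q))"
    by (simp add: norm_triangle_ineq)
  also have "\<dots> \<le> spec_norm R * norm (p - ?p) + spec_norm X * norm (q - ?q)"
    by (intro add_mono norm_mult_vec_le_spec_norm)
  also have "\<dots> \<le> spec_norm R * (spec_norm R * A / amin) + spec_norm X * (spec_norm X * A / amin)"
    using p q spec_norm_nonneg by (intro add_mono mult_left_mono)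
  also have "\<dots> = ?c * A" by (simp add: power2_eq_square add_divide_distrib algebra_simps)
  also have "\<dots> \<le> ?c * (sqrt 2 * S)" using A amin by (intro mult_left_mono) auto
  finally have "sqrt 2 * norm ?dV \<le> sqrt 2 * (?c * (sqrt 2 * S))"
    by (rule mult_left_mono) simp
  also have "\<dots> = (sqrt 2 * sqrt 2) * ?c * S" by (simp only: mult_ac)
  also have "\<dots> = 2 * ((spec_norm R)\<^sup>2 + (spec_norm X)\<^sup>2) / amin * S" by simp
  finally show ?thesis unfolding G_err .
qed

end

section \<open>Error caused by stale duals\<close>

lemma abs_diff_le_sum_increments:
  fixes f :: "int \<Rightarrow> real"
  assumes "a \<le> b" "b \<le> c"
  shows "\<bar>f b - f c\<bar> \<le> (\<Sum>\<tau>\<in>{a..<c}. \<bar>f (\<tau> + 1) - f \<tau>\<bar>)"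
proof -
  have "\<bar>f b - f (b + int n)\<bar> \<le> (\<Sum>\<tau>\<in>{b..<b + int n}. \<bar>f (\<tau> + 1) - f \<tau>\<bar>)" for n
  proof (induction n)
    case (Suc n)
    have "b + int (Suc n) = b + int n + 1" by simp
    then have "\<bar>f b - f (b + int (Suc n))\<bar> \<le> \<bar>f b - f (b + int n)\<bar> + \<bar>f (b + int n + 1) - f (b + int n)\<bar>"
      using abs_triangle_ineq[of "f b - f (b + int n)" "f (b + int n) - f (b + int n + 1)"]
      by (simp only: abs_minus_commute[of "f (b + int n)"] diff_add_cancel)
    moreover have "{b..<b + int (Suc n)} = insert (b + int n) {b..<b + int n}" by auto
    ultimately show ?case using Suc by simp
  qed simp
  from this[of "nat (c - b)"] have "\<bar>f b - f c\<bar> \<le> (\<Sum>\<tau>\<in>{b..<c}. \<bar>f (\<tau> + 1) - f \<tau>\<bar>)"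
    using assms by simp
  also have "\<dots> \<le> (\<Sum>\<tau>\<in>{a..<c}. \<bar>f (\<tau> + 1) - f \<tau>\<bar>)"
    by (rule sum_mono2) (use assms in auto)
  finally show ?thesis .
qed

lemma norm_diff_le_sqrt2_norm: "norm (fst d - snd d) \<le> sqrt 2 * norm d"
proof -
  have "(norm (fst d) + norm (snd d))\<^sup>2 \<le> 2 * ((norm (fst d))\<^sup>2 + (norm (snd d))\<^sup>2)"
    using sum_squares_ge_zero[of "norm (fst d) - norm (snd d)" 0]
    by (simp add: power2_eq_square algebra_simps)
  moreover have "(norm d)\<^sup>2 = (norm (fst d))\<^sup>2 + (norm (snd d))\<^sup>2"
    using norm_Pair[of "fst d" "snd d"] by simp
  ultimately have "norm (fst d) + norm (snd d) \<le> sqrt (2 * (norm d)\<^sup>2)"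
    by (simp add: real_le_rsqrt)
  then show ?thesis using norm_triangle_ineq4[of "fst d" "snd d"] by (simp add: real_sqrt_mult)
qed

lemma norm_sum_abs_increments_le:
  fixes E :: "int \<Rightarrow> (real^'n) \<times> (real^'n)"
  shows "norm (\<chi> k. \<Sum>\<tau>\<in>A. \<bar>(fst (E (\<tau> + 1)) $ k - snd (E (\<tau> + 1)) $ k) - (fst (E \<tau>) $ k - snd (E \<tau>) $ k)\<bar>)
     \<le> sqrt 2 * (\<Sum>\<tau>\<in>A. norm (E \<tau> - E (\<tau> + 1)))"
proof -
  let ?inc = "\<lambda>\<tau>. \<chi> k. \<bar>(fst (E (\<tau> + 1)) $ k - snd (E (\<tau> + 1)) $ k) - (fst (E \<tau>) $ k - snd (E \<tau>) $ k)\<bar>"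
  have inc: "norm (?inc \<tau>) \<le> sqrt 2 * norm (E \<tau> - E (\<tau> + 1))" for \<tau>
  proof -
    let ?d = "E \<tau> - E (\<tau> + 1)"
    have "norm (?inc \<tau>) \<le> norm (fst ?d - snd ?d)"
      by (rule norm_le_componentwise_cart) (simp add: algebra_simps abs_minus_commute)
    also have "\<dots> \<le> sqrt 2 * norm ?d" by (rule norm_diff_le_sqrt2_norm)
    finally show ?thesis .
  qed
  have "(\<chi> k. \<Sum>\<tau>\<in>A. \<bar>(fst (E (\<tau> + 1)) $ k - snd (E (\<tau> + 1)) $ k) - (fst (E \<tau>) $ k - snd (E \<tau>) $ k)\<bar>)
     = (\<Sum>\<tau>\<in>A. ?inc \<tau>)"
    by (simp add: vec_eq_iff sum_component)
  also have "norm \<dots> \<le> (\<Sum>\<tau>\<in>A. sqrt 2 * norm (E \<tau> - E (\<tau> + 1)))"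
    using norm_sum inc by (rule order_trans[OF _ sum_mono])
  finally show ?thesis by (simp add: sum_distrib_left)
qed

context upward_messages
begin
definition lam_variation :: "nat \<Rightarrow> real^'n" where
  "lam_variation t = (\<chi> k. \<Sum>\<tau>\<in>{int t - int (diam par * (tm + 1))..<int t}. \<bar>lam_at (\<tau> + 1) k - lam_at \<tau> k\<bar>)"

lemma hop_lag_le_diam: "hop_lag i k \<le> int (diam par * (tm + 1))"
proof -
  have "tree_dist par i k * (tm + 1) \<le> diam par * (tm + 1)"
    using tree_dist_le_diam by (rule mult_right_mono) simp
  then have "int (tree_dist par i k * (tm + 1)) \<le> int (diam par * (tm + 1))" by (simp only: of_nat_le_iff)
  then show ?thesis by (simp add: hop_lag_def algebra_simps)
qed

lemma norm_lam_variation_le: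
  fixes E :: "int \<Rightarrow> (real^'n) \<times> (real^'n)"
  assumes "\<And>s k. lam_at s k = fst (E s) $ k - snd (E s) $ k"
  shows "norm (lam_variation t)
    \<le> sqrt 2 * (\<Sum>s\<in>{int t - int (diam par * (tm + 1))..<int t}. norm (E s - E (s + 1)))"
  using norm_sum_abs_increments_le[of E] by (simp add: lam_variation_def assms)

end

context downward_messages
begin

lemma z_error:
  assumes "\<And>k. 0 \<le> w k"
  shows "\<bar>z t $ i - (M *v (\<chi> k. lam t k)) $ i\<bar> \<le> (M *v lam_variation t) $ i"
proof -
  obtain \<sigma> where z: "z t $ i = (\<Sum>k\<in>UNIV. M $ i $ k * lam_at (\<sigma> k) k)"
    and \<sigma>: "\<And>k. int t - hop_lag i k \<le> \<sigma> k \<and> \<sigma> k \<le> int t"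
    using z_delayed[of i t] unfolding delayed_sum_def by blast
  have "\<bar>z t $ i - (M *v (\<chi> k. lam t k)) $ i\<bar>
      = \<bar>\<Sum>k\<in>UNIV. M $ i $ k * (lam_at (\<sigma> k) k - lam_at (int t) k)\<bar>"
    by (simp add: z matrix_vector_mult_def sum_subtractf right_diff_distrib)
  also have "\<dots> \<le> (\<Sum>k\<in>UNIV. \<bar>M $ i $ k * (lam_at (\<sigma> k) k - lam_at (int t) k)\<bar>)"
    by (rule sum_abs)
  also have "\<dots> \<le> (\<Sum>k\<in>UNIV. M $ i $ k * lam_variation t $ k)"
  proof (rule sum_mono)
    fix k
    have window: "int t - int (diam par * (tm + 1)) \<le> \<sigma> k"
      using \<sigma>[of k] hop_lag_le_diam[of i k] by linarith
    have "\<bar>lam_at (\<sigma> k) k - lam_at (int t) k\<bar> \<le> lam_variation t $ k"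
      using abs_diff_le_sum_increments[OF window, of "int t" "\<lambda>s. lam_at s k"] \<sigma>[of k]
      unfolding lam_variation_def by simp
    then show "\<bar>M $ i $ k * (lam_at (\<sigma> k) k - lam_at (int t) k)\<bar> \<le> M $ i $ k * lam_variation t $ k"
      using path_matrix_nonneg[OF assms] by (simp add: abs_mult mult_left_mono)
  qed
  also have "\<dots> = (M *v lam_variation t) $ i" by (simp add: matrix_vector_mult_def)
  finally show ?thesis .
qed

lemma primal_iterate_error:
  assumes "\<And>k. 0 \<le> w k" and a: "\<And>i. 0 < a $ i" and amin: "0 < amin" "\<And>i. amin \<le> a $ i"
    and \<mu>: "\<And>k. fst \<mu> $ k - snd \<mu> $ k = lam t k"
  shows "norm ((\<chi> i. clamp ((z t $ i - b $ i) / a $ i) (lo $ i) (hi $ i)) - primal_response M a b lo hi \<mu>)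
     \<le> spec_norm M * norm (lam_variation t) / amin"
proof -
  have price: "dual_price M \<mu> $ i = (M *v (\<chi> k. lam t k)) $ i" for i
    using \<mu> path_matrix_sym
    by (simp add: dual_price_def vector_matrix_mult_def matrix_vector_mult_def mult.commute)
  have "norm ((\<chi> i. clamp ((z t $ i - b $ i) / a $ i) (lo $ i) (hi $ i)) - primal_response M a b lo hi \<mu>)
      \<le> norm ((1 / amin) *\<^sub>R (M *v lam_variation t))"
  proof (rule norm_le_componentwise_cart)
    fix i
    have "\<bar>clamp ((z t $ i - b $ i) / a $ i) (lo $ i) (hi $ i) - primal_response M a b lo hi \<mu> $ i\<bar>
        \<le> \<bar>(z t $ i - b $ i) / a $ i - (dual_price M \<mu> $ i - b $ i) / a $ i\<bar>"
      unfolding primal_response_def by (simp add: clamp_lipschitz)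
    also have "\<dots> = \<bar>z t $ i - (M *v (\<chi> k. lam t k)) $ i\<bar> / a $ i"
      using a[of i] by (simp add: price diff_divide_distrib[symmetric])
    also have "\<dots> \<le> \<bar>z t $ i - (M *v (\<chi> k. lam t k)) $ i\<bar> / amin"
      using a[of i] amin by (intro divide_left_mono) auto
    also have "\<dots> \<le> (M *v lam_variation t) $ i / amin"
      using z_error[OF assms(1)] amin by (intro divide_right_mono) auto
    also have "\<dots> \<le> \<bar>(M *v lam_variation t) $ i\<bar> / amin"
      using amin by (intro divide_right_mono) auto
    also have "\<dots> = \<bar>((1 / amin) *\<^sub>R (M *v lam_variation t)) $ i\<bar>" using amin by simp
    finally show "norm (((\<chi> i. clamp ((z t $ i - b $ i) / a $ i) (lo $ i) (hi $ i))
        - primal_response M a b lo hi \<mu>) $ i) \<le> norm (((1 / amin) *\<^sub>R (M *v lam_variation t)) $ i)"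
      by simp
  qed
  also have "\<dots> = norm (M *v lam_variation t) / amin" using amin by simp
  also have "\<dots> \<le> spec_norm M * norm (lam_variation t) / amin"
    using amin by (intro divide_right_mono norm_mult_vec_le_spec_norm) auto
  finally show ?thesis .
qed

end

lemma min_Min_range_bounds:
  fixes f g :: "'n::finite \<Rightarrow> real"
  assumes "\<And>i. 0 < f i" "\<And>i. 0 < g i"
  shows "0 < min (Min (range f)) (Min (range g))"
    and "min (Min (range f)) (Min (range g)) \<le> f i"
    and "min (Min (range f)) (Min (range g)) \<le> g i"
proof -
  have "Min (range f) \<in> range f" "Min (range g) \<in> range g" by (auto intro: Min_in)
  then show "0 < min (Min (range f)) (Min (range g))" using assms by auto
  show "min (Min (range f)) (Min (range g)) \<le> f i" by (simp add: min.coboundedI1)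
  show "min (Min (range f)) (Min (range g)) \<le> g i" by (simp add: min.coboundedI2)
qed

lemma mult_le_mult_sqrt_card: "0 \<le> a \<Longrightarrow> 0 \<le> b \<Longrightarrow> a * b \<le> a * sqrt (real CARD('n::finite)) * b"
proof -
  assume "0 \<le> a" "0 \<le> b"
  moreover have "1 \<le> sqrt (real CARD('n))" by (simp add: Suc_le_eq)
  ultimately show ?thesis using mult_left_mono[of 1 "sqrt (real CARD('n))" "a * b"] by (simp add: mult_ac)
qed

theorem lemma3:
  fixes par :: "'n::finite \<Rightarrow> 'n option"
    and r x :: "'n \<Rightarrow> real"
    and v0 \<gamma> :: real
    and vlo vhi plo phi qlo qhi aP bP cP aQ bQ cQ :: "real^'n"
    and tau_up tau_down :: "'n \<Rightarrow> nat \<Rightarrow> nat"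
    and tau_max :: nat
    and zP zQ lamlo lamhi alpha betaP betaQ ahat bPhat bQhat :: "nat \<Rightarrow> real^'n"
    and t :: nat
  defines "R \<equiv> path_matrix par r"
    and "X \<equiv> path_matrix par x"
    and "C \<equiv> children par"
    and "lam \<equiv> (\<lambda>s i. lamlo s $ i - lamhi s $ i)"
    and "v \<equiv> (\<lambda>s. voltage (path_matrix par r) (path_matrix par x) v0 ((\<lambda>s. \<chi> i. clamp ((zP s $ i - bP $ i) / aP $ i) (plo $ i) (phi $ i)) s) ((\<lambda>s. \<chi> i. clamp ((zQ s $ i - bQ $ i) / aQ $ i) (qlo $ i) (qhi $ i)) s))"
    and "g \<equiv> (\<lambda>s. (vlo - (\<lambda>s. voltage (path_matrix par r) (path_matrix par x) v0 ((\<lambda>s. \<chi> i. clamp ((zP s $ i - bP $ i) / aP $ i) (plo $ i) (phi $ i)) s) ((\<lambda>s. \<chi> i. clamp ((zQ s $ i - bQ $ i) / aQ $ i) (qlo $ i) (qhi $ i)) s)) s, (\<lambda>s. voltage (path_matrix par r) (path_matrix par x) v0 ((\<lambda>s. \<chi> i. clamp ((zP s $ i - bP $ i) / aP $ i) (plo $ i) (phi $ i)) s) ((\<lambda>s. \<chi> i. clamp ((zQ s $ i - bQ $ i) / aQ $ i) (qlo $ i) (qhi $ i)) s)) s - vhi))"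
    and "D \<equiv> dual_fun (path_matrix par r) (path_matrix par x) v0 vlo vhi plo phi qlo qhi aP bP cP aQ bQ cQ"
    and "lamE \<equiv> (\<lambda>s::int. if s < 0 then (0, 0) else (lamlo (nat s), lamhi (nat s)))"
    and "amin \<equiv> min (Min (range (\<lambda>i. aP $ i))) (Min (range (\<lambda>i. aQ $ i)))"
    and "L \<equiv> 2 * ((spec_norm (path_matrix par r))\<^sup>2 + (spec_norm (path_matrix par x))\<^sup>2) / min (Min (range (\<lambda>i. aP $ i))) (Min (range (\<lambda>i. aQ $ i)))"
    and "t0 \<equiv> diam par * (tau_max + 1)"
  assumes radial: "is_radial par"
    and r_nonneg: "\<And>k. r k \<ge> 0" and x_nonneg: "\<And>k. x k \<ge> 0"
    and v_le: "\<And>i. vlo $ i \<le> vhi $ i"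
    and p_le: "\<And>i. plo $ i \<le> phi $ i"
    and q_le: "\<And>i. qlo $ i \<le> qhi $ i"
    and aP_pos: "\<And>i. aP $ i > 0" and aQ_pos: "\<And>i. aQ $ i > 0"
    and gamma_pos: "\<gamma> > 0"
    and delay_up: "\<And>j s. tau_up j s \<le> tau_max"
    and delay_down: "\<And>j s. tau_down j s \<le> tau_max"
    and init: "zP 0 = 0" "zQ 0 = 0" "lamlo 0 = 0" "lamhi 0 = 0"
      "alpha 0 = 0" "betaP 0 = 0" "betaQ 0 = 0" "ahat 0 = 0" "bPhat 0 = 0" "bQhat 0 = 0"
    and root_hat: "\<And>i s. par i = None \<Longrightarrow> bPhat s $ i = 0 \<and> bQhat s $ i = 0"
    and step_lamlo: "\<And>s i. lamlo (Suc s) $ i = max (lamlo s $ i + \<gamma> * (vlo $ i - v s $ i)) 0"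
    and step_lamhi: "\<And>s i. lamhi (Suc s) $ i = max (lamhi s $ i + \<gamma> * (v s $ i - vhi $ i)) 0"
    and step_alpha: "\<And>s i. alpha (Suc s) $ i = lam (Suc s) i + (\<Sum>j\<in>C i. ahat s $ j)"
    and step_betaP: "\<And>s i j. par j = Some i \<Longrightarrow>
       betaP (Suc s) $ j = R $ i $ i * (lam (Suc s) i + (\<Sum>k\<in>C i - {j}. ahat s $ k)) + bPhat s $ i"
    and step_betaQ: "\<And>s i j. par j = Some i \<Longrightarrow>
       betaQ (Suc s) $ j = X $ i $ i * (lam (Suc s) i + (\<Sum>k\<in>C i - {j}. ahat s $ k)) + bQhat s $ i"
    and step_ahat: "\<And>s j. par j \<noteq> None \<Longrightarrow>
       ahat (Suc s) $ j = (if tau_up j s \<le> Suc s then alpha (Suc s - tau_up j s) $ j else 0)"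
    and step_bPhat: "\<And>s j. par j \<noteq> None \<Longrightarrow>
       bPhat (Suc s) $ j = (if tau_down j s \<le> Suc s then betaP (Suc s - tau_down j s) $ j else 0)"
    and step_bQhat: "\<And>s j. par j \<noteq> None \<Longrightarrow>
       bQhat (Suc s) $ j = (if tau_down j s \<le> Suc s then betaQ (Suc s - tau_down j s) $ j else 0)"
    and step_zP: "\<And>s i. zP (Suc s) $ i = R $ i $ i * (lam (Suc s) i + (\<Sum>j\<in>C i. ahat (Suc s) $ j)) + bPhat (Suc s) $ i"
    and step_zQ: "\<And>s i. zQ (Suc s) $ i = X $ i $ i * (lam (Suc s) i + (\<Sum>j\<in>C i. ahat (Suc s) $ j)) + bQhat (Suc s) $ i"
  shows "\<forall>G. has_gradient D G (lamlo t, lamhi t) \<longrightarrow>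
           norm (G - g t) \<le> L * sqrt (real CARD('n))
              * (\<Sum>s\<in>{int t - int t0 ..< int t}. norm (lamE s - lamE (s + 1)))"
proof (intro allI impI)
  fix G assume G: "has_gradient D G (lamlo t, lamhi t)"
  interpret P: downward_messages par lam alpha ahat tau_up tau_max r betaP bPhat zP tau_down
    using radial init root_hat step_ahat step_bPhat delay_up delay_down step_alpha[unfolded C_def]
      step_betaP[unfolded C_def R_def] step_zP[unfolded C_def R_def]
    by unfold_locales (simp_all add: lam_def)
  interpret Q: downward_messages par lam alpha ahat tau_up tau_max x betaQ bQhat zQ tau_down
    using radial init root_hat step_ahat step_bQhat delay_up delay_down step_alpha[unfolded C_def]
      step_betaQ[unfolded C_def X_def] step_zQ[unfolded C_def X_def]
    by unfold_locales (simp_all add: lam_def)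
  have amin: "0 < amin" "\<And>i. amin \<le> aP $ i" "\<And>i. amin \<le> aQ $ i"
    unfolding amin_def by (rule min_Min_range_bounds[OF aP_pos aQ_pos])+
  let ?S = "\<Sum>s\<in>{int t - int t0 ..< int t}. norm (lamE s - lamE (s + 1))"
  have lam_at: "P.lam_at s k = fst (lamE s) $ k - snd (lamE s) $ k" for s k
    unfolding P.lam_at_def lamE_def by (simp add: lam_def)
  have "norm (G - g t) \<le> L * ?S"
    unfolding g_def L_def R_def X_def amin_def[symmetric] t0_def
    by (rule dual_gradient_error_le[OF aP_pos aQ_pos p_le q_le G[unfolded D_def] amin(1)
          P.primal_iterate_error[OF r_nonneg aP_pos amin(1,2)]
          Q.primal_iterate_error[OF x_nonneg aQ_pos amin(1,3)] P.norm_lam_variation_le[OF lam_at]])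
      (simp_all add: lam_def)
  also have "\<dots> \<le> L * sqrt (real CARD('n)) * ?S"
    using amin(1) by (intro mult_le_mult_sqrt_card) (simp_all add: L_def amin_def[symmetric] sum_nonneg)
  finally show "norm (G - g t) \<le> L * sqrt (real CARD('n)) * ?S" .
qed

end
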